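(* Let $G$ be a finite group and let $\alpha_1,\alpha_2\colon G\to\mathbf{GL}_n(k)$ be injective homomorphisms. Then there exists $\varphi\in\mathrm{Cr}_{2n}$ such that $\alpha_1=\mathrm{Int}(\varphi)\circ\alpha_2$, where $\mathrm{Int}(\varphi)$ denotes conjugation by $\varphi$.
   Context: $k$ is an algebraically closed field of characteristic zero. $\mathrm{Cr}_m$ is the Cremona group of rank $m$, i.e., the group of birational self-maps of $\mathbf{A}^m$. $\mathbf{GL}_n(k)$ is identified with the subgroup of $\mathrm{Cr}_n$ of linear transformations of $\mathbf{A}^n$, and $\mathrm{Cr}_n$ is identified with a subgroup of $\mathrm{Cr}_{2n}$ via the standard embedding (acting on the first $n$ coordinates of $\mathbf{A}^{2n}=\mathbf{A}^n\times\mathbf{A}^n$ and trivially on the last $n$). *)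

theory Defs
  imports "HOL-Algebra.Group" "HOL-Computational_Algebra.Polynomial" "Jordan_Normal_Form.Matrix"
begin

definition alg_closed_field :: "'k::field itself \<Rightarrow> bool" where
  "alg_closed_field _ \<longleftrightarrow> (\<forall>p :: 'k poly. 0 < degree p \<longrightarrow> (\<exists>x. poly p x = 0))"

text \<open>Points of the affine space A^m are functions nat => k; only coordinates 0..m-1 matter.
  Polynomial functions in the m coordinates x_0,...,x_(m-1).\<close>
inductive_set poly_funs :: "nat \<Rightarrow> ((nat \<Rightarrow> 'k::field) \<Rightarrow> 'k) set" for m :: nat where
  pf_const: "(\<lambda>x. c) \<in> poly_funs m"
| pf_var: "i < m \<Longrightarrow> (\<lambda>x. x i) \<in> poly_funs m"
| pf_add: "f \<in> poly_funs m \<Longrightarrow> g \<in> poly_funs m \<Longrightarrow> (\<lambda>x. f x + g x) \<in> poly_funs m"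
| pf_mult: "f \<in> poly_funs m \<Longrightarrow> g \<in> poly_funs m \<Longrightarrow> (\<lambda>x. f x * g x) \<in> poly_funs m"

text \<open>A set U contains a nonempty Zariski open subset of A^m (a basic open set D(h), h a nonzero polynomial).\<close>
definition contains_nonempty_open :: "nat \<Rightarrow> ((nat \<Rightarrow> 'k::field) set) \<Rightarrow> bool" where
  "contains_nonempty_open m U \<longleftrightarrow>
     (\<exists>h \<in> poly_funs m. (\<exists>x. h x \<noteq> 0) \<and> {x. h x \<noteq> 0} \<subseteq> U)"

text \<open>A rational map A^m -> A^m given by coordinate fractions p_i / q_i (i < m), q_i nonzero.\<close>
type_synonym 'k ratmap = "(nat \<Rightarrow> (nat \<Rightarrow> 'k) \<Rightarrow> 'k) \<times> (nat \<Rightarrow> (nat \<Rightarrow> 'k) \<Rightarrow> 'k)"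

definition is_ratmap :: "nat \<Rightarrow> 'k::field ratmap \<Rightarrow> bool" where
  "is_ratmap m F \<longleftrightarrow> (\<forall>i<m. fst F i \<in> poly_funs m \<and> snd F i \<in> poly_funs m \<and> (\<exists>x. snd F i x \<noteq> 0))"

definition rm_defined :: "nat \<Rightarrow> 'k::field ratmap \<Rightarrow> (nat \<Rightarrow> 'k) \<Rightarrow> bool" where
  "rm_defined m F x \<longleftrightarrow> (\<forall>i<m. snd F i x \<noteq> 0)"

definition rm_eval :: "'k::field ratmap \<Rightarrow> (nat \<Rightarrow> 'k) \<Rightarrow> (nat \<Rightarrow> 'k)" where
  "rm_eval F x = (\<lambda>i. fst F i x / snd F i x)"

definition birational_pair :: "nat \<Rightarrow> 'k::field ratmap \<Rightarrow> 'k ratmap \<Rightarrow> bool" where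
  "birational_pair m \<phi> \<psi> \<longleftrightarrow> is_ratmap m \<phi> \<and> is_ratmap m \<psi> \<and>
     contains_nonempty_open m {x. rm_defined m \<phi> x \<and> rm_defined m \<psi> (rm_eval \<phi> x) \<and>
                                  (\<forall>i<m. rm_eval \<psi> (rm_eval \<phi> x) i = x i)} \<and>
     contains_nonempty_open m {x. rm_defined m \<psi> x \<and> rm_defined m \<phi> (rm_eval \<psi> x) \<and>
                                  (\<forall>i<m. rm_eval \<phi> (rm_eval \<psi> x) i = x i)}"

definition cremona :: "nat \<Rightarrow> 'k::field ratmap \<Rightarrow> bool" where
  "cremona m \<phi> \<longleftrightarrow> (\<exists>\<psi>. birational_pair m \<phi> \<psi>)"

definition GL :: "nat \<Rightarrow> 'k::field mat monoid" where
  "GL n = \<lparr>carrier = {A \<in> carrier_mat n n. invertible_mat A}, mult = (*), one = 1\<^sub>m n\<rparr>"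

text \<open>Action of A in GL_n on A^(2n) = A^n x A^n: linear on the first n coordinates, trivial on the last n
  (the standard embedding GL_n(k) in Cr_n in Cr_2n).\<close>
definition lin_act2 :: "nat \<Rightarrow> 'k::field mat \<Rightarrow> (nat \<Rightarrow> 'k) \<Rightarrow> (nat \<Rightarrow> 'k)" where
  "lin_act2 n A y = (\<lambda>i. if i < n then (\<Sum>j<n. A $$ (i, j) * y j) else y i)"

end

theory Submission
  imports Defs "Jordan_Normal_Form.Determinant"
begin

text \<open>Write \<open>(x, y)\<close> for a point of \<open>A\<^sup>n \<times> A\<^sup>n\<close>. Since \<open>G\<close> is finite and \<open>\<alpha>\<^sub>2\<close> is faithful,
  some \<open>x\<^sub>0\<close> is moved by every \<open>\<alpha>\<^sub>2(g) \<noteq> 1\<close>; averaging a polynomial \<open>u\<close> with \<open>u(x\<^sub>0) = 1\<close> that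
  vanishes on the rest of the orbit of \<open>x\<^sub>0\<close> gives the polynomial matrix
  \<open>F(x) = \<Sum>\<^sub>h u(\<alpha>\<^sub>2(h)\<^sup>-\<^sup>1 x) \<alpha>\<^sub>1(h)\<close> with \<open>F(\<alpha>\<^sub>2(g) x) = \<alpha>\<^sub>1(g) F(x)\<close> and \<open>F(x\<^sub>0) = 1\<close>.
  Symmetrically there is \<open>E\<close> with \<open>E(\<alpha>\<^sub>1(g) x) = \<alpha>\<^sub>2(g) E(x)\<close> and \<open>E(y\<^sub>0) = 1\<close>. Then
  \<open>\<phi>(x, y) = (F(x) y, E(F(x) y)\<^sup>-\<^sup>1 x)\<close> is birational with inverse \<open>\<psi>(x, y) = (E(x) y, F(E(x) y)\<^sup>-\<^sup>1 x)\<close>,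
  and the equivariance of \<open>F\<close> and \<open>E\<close> gives \<open>\<phi> \<circ> (\<alpha>\<^sub>2(g) \<times> 1) \<circ> \<psi> = \<alpha>\<^sub>1(g) \<times> 1\<close>.\<close>

lemma poly_funs_sum:
  "finite A \<Longrightarrow> (\<And>a. a \<in> A \<Longrightarrow> f a \<in> poly_funs m) \<Longrightarrow> (\<lambda>x. \<Sum>a\<in>A. f a x) \<in> poly_funs m"
proof (induction A rule: finite_induct)
  case empty
  then show ?case using pf_const[of 0 m] by simp
next
  case (insert a A)
  then show ?case using pf_add[of "f a" m "\<lambda>x. \<Sum>a\<in>A. f a x"] by simp
qed

lemma poly_funs_prod:
  "finite A \<Longrightarrow> (\<And>a. a \<in> A \<Longrightarrow> f a \<in> poly_funs m) \<Longrightarrow> (\<lambda>x. \<Prod>a\<in>A. f a x) \<in> poly_funs m"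
proof (induction A rule: finite_induct)
  case empty
  then show ?case using pf_const[of 1 m] by simp
next
  case (insert a A)
  then show ?case using pf_mult[of "f a" m "\<lambda>x. \<Prod>a\<in>A. f a x"] by simp
qed

lemma poly_funs_cmult: "f \<in> poly_funs m \<Longrightarrow> (\<lambda>x. c * f x) \<in> poly_funs m"
  using pf_mult[OF pf_const] by blast

lemma poly_funs_diff: "f \<in> poly_funs m \<Longrightarrow> g \<in> poly_funs m \<Longrightarrow> (\<lambda>x. f x - g x) \<in> poly_funs m"
  using pf_add[of f m "\<lambda>x. (-1) * g x"] poly_funs_cmult[of g m "-1"] by simp

lemma poly_funs_subst:
  "P \<in> poly_funs n \<Longrightarrow> (\<And>j. j < n \<Longrightarrow> Q j \<in> poly_funs m) \<Longrightarrow> (\<lambda>x. P (\<lambda>j. Q j x)) \<in> poly_funs m"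
  by (induction P rule: poly_funs.induct) (auto intro: poly_funs.intros)

definition poly_mat_fun :: "nat \<Rightarrow> nat \<Rightarrow> ((nat \<Rightarrow> 'k::field) \<Rightarrow> 'k mat) \<Rightarrow> bool" where
  "poly_mat_fun m k M \<longleftrightarrow> (\<forall>x. M x \<in> carrier_mat k k) \<and> (\<forall>i<k. \<forall>j<k. (\<lambda>x. M x $$ (i,j)) \<in> poly_funs m)"

definition poly_vec_fun :: "nat \<Rightarrow> nat \<Rightarrow> ((nat \<Rightarrow> 'k::field) \<Rightarrow> 'k vec) \<Rightarrow> bool" where
  "poly_vec_fun m k w \<longleftrightarrow> (\<forall>x. w x \<in> carrier_vec k) \<and> (\<forall>j<k. (\<lambda>x. w x $ j) \<in> poly_funs m)"

lemma poly_vec_fun_vec: "n \<le> m \<Longrightarrow> poly_vec_fun m n (\<lambda>x. vec n x)"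
  unfolding poly_vec_fun_def by (auto intro: pf_var)

lemma poly_mat_fun_const: "A \<in> carrier_mat k k \<Longrightarrow> poly_mat_fun m k (\<lambda>x. A)"
  unfolding poly_mat_fun_def by (auto intro: pf_const)

lemma poly_funs_det:
  assumes "poly_mat_fun m k M"
  shows "(\<lambda>x. det (M x)) \<in> poly_funs m"
proof -
  have M: "\<And>x. M x \<in> carrier_mat k k" using assms unfolding poly_mat_fun_def by auto
  have "(\<lambda>x. \<Sum>p \<in> {p. p permutes {0..<k}}. signof p * (\<Prod>i = 0..<k. M x $$ (i, p i))) \<in> poly_funs m"
  proof (intro poly_funs_sum poly_funs_cmult poly_funs_prod)
    fix p i assume p: "p \<in> {p. p permutes {0..<k}}" and i: "i \<in> {0..<k}"
    then have "p i < k" using permutes_in_image by fastforce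
    then show "(\<lambda>x. M x $$ (i, p i)) \<in> poly_funs m" using assms i unfolding poly_mat_fun_def by auto
  qed (simp_all add: finite_permutations)
  then show ?thesis using det_def'[OF M] by simp
qed

lemma poly_mat_fun_delete:
  assumes "poly_mat_fun m k M" "i < k" "j < k"
  shows "poly_mat_fun m (k - 1) (\<lambda>x. mat_delete (M x) i j)"
  unfolding poly_mat_fun_def
proof (intro conjI allI impI)
  have M: "\<And>x. M x \<in> carrier_mat k k" using assms unfolding poly_mat_fun_def by auto
  then show "mat_delete (M x) i j \<in> carrier_mat (k - 1) (k - 1)" for x by (rule mat_delete_carrier)
  fix a b assume ab: "a < k - 1" "b < k - 1"
  define a' where "a' = (if a < i then a else Suc a)"
  define b' where "b' = (if b < j then b else Suc b)"
  have "a' < k" "b' < k" using ab unfolding a'_def b'_def by auto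
  then have "(\<lambda>x. M x $$ (a', b')) \<in> poly_funs m" using assms unfolding poly_mat_fun_def by auto
  moreover have "mat_delete (M x) i j $$ (a, b) = M x $$ (a', b')" for x
    using ab M[of x] unfolding mat_delete_def a'_def b'_def by auto
  ultimately show "(\<lambda>x. mat_delete (M x) i j $$ (a, b)) \<in> poly_funs m" by simp
qed

lemma poly_mat_fun_adj:
  assumes "poly_mat_fun m k M"
  shows "poly_mat_fun m k (\<lambda>x. adj_mat (M x))"
  unfolding poly_mat_fun_def
proof (intro conjI allI impI)
  have M: "\<And>x. M x \<in> carrier_mat k k" using assms unfolding poly_mat_fun_def by auto
  then show "adj_mat (M x) \<in> carrier_mat k k" for x by (rule adj_mat(1))
  fix i j assume ij: "i < k" "j < k"
  have "(\<lambda>x. (-1)^(j+i) * det (mat_delete (M x) j i)) \<in> poly_funs m"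
    by (rule poly_funs_cmult, rule poly_funs_det, rule poly_mat_fun_delete[OF assms ij(2,1)])
  moreover have "adj_mat (M x) $$ (i, j) = (-1)^(j+i) * det (mat_delete (M x) j i)" for x
    using ij M[of x] by (simp add: adj_mat_def cofactor_def)
  ultimately show "(\<lambda>x. adj_mat (M x) $$ (i, j)) \<in> poly_funs m" by simp
qed

lemma vec_index_eta: "v \<in> carrier_vec n \<Longrightarrow> vec n (\<lambda>j. v $ j) = v"
  by (intro eq_vecI) auto

lemma mult_mat_vec_vec_index:
  "A \<in> carrier_mat k n \<Longrightarrow> r < k \<Longrightarrow> (A *\<^sub>v vec n p) $ r = (\<Sum>j<n. A $$ (r,j) * p j)"
  unfolding mult_mat_vec_def scalar_prod_def by (auto simp: atLeast0LessThan intro: sum.cong)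

lemma poly_vec_fun_mult_mat_vec:
  assumes "poly_mat_fun m k M" "poly_vec_fun m k w"
  shows "poly_vec_fun m k (\<lambda>x. M x *\<^sub>v w x)"
  unfolding poly_vec_fun_def
proof (intro conjI allI impI)
  show "M x *\<^sub>v w x \<in> carrier_vec k" for x
    using assms unfolding poly_mat_fun_def poly_vec_fun_def by (meson mult_mat_vec_carrier)
  fix i assume i: "i < k"
  have "(\<lambda>x. \<Sum>j<k. M x $$ (i,j) * w x $ j) \<in> poly_funs m"
    using assms i unfolding poly_mat_fun_def poly_vec_fun_def by (intro poly_funs_sum pf_mult) auto
  moreover have "(M x *\<^sub>v w x) $ i = (\<Sum>j<k. M x $$ (i,j) * w x $ j)" for x
  proof -
    have "M x \<in> carrier_mat k k" "vec k (\<lambda>j. w x $ j) = w x"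
      using assms vec_index_eta[of "w x" k] unfolding poly_mat_fun_def poly_vec_fun_def by auto
    then show ?thesis using mult_mat_vec_vec_index[of "M x" k k i "\<lambda>j. w x $ j"] i by simp
  qed
  ultimately show "(\<lambda>x. (M x *\<^sub>v w x) $ i) \<in> poly_funs m" by simp
qed

lemma poly_funs_comp_vec:
  assumes "(\<lambda>x. u (vec k x)) \<in> poly_funs k" "poly_vec_fun m k w"
  shows "(\<lambda>x. u (w x)) \<in> poly_funs m"
proof -
  have "(\<lambda>x. u (vec k (\<lambda>j. w x $ j))) \<in> poly_funs m"
    by (rule poly_funs_subst[OF assms(1)]) (use assms(2) in \<open>auto simp: poly_vec_fun_def\<close>)
  moreover have "vec k (\<lambda>j. w x $ j) = w x" for x
    using assms(2) vec_index_eta[of "w x" k] unfolding poly_vec_fun_def by blast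
  ultimately show ?thesis by simp
qed

lemma poly_mat_fun_comp_vec:
  assumes "poly_mat_fun k l (\<lambda>x. F (vec k x))" "poly_vec_fun m k w"
  shows "poly_mat_fun m l (\<lambda>x. F (w x))"
  unfolding poly_mat_fun_def
proof (intro conjI allI impI)
  have "vec k (\<lambda>j. w x $ j) = w x" for x
    using assms(2) vec_index_eta[of "w x" k] unfolding poly_vec_fun_def by blast
  then show "F (w x) \<in> carrier_mat l l" for x
    using assms(1) unfolding poly_mat_fun_def by metis
  show "(\<lambda>x. F (w x) $$ (i, j)) \<in> poly_funs m" if "i < l" "j < l" for i j
  proof (rule poly_funs_comp_vec[of "\<lambda>v. F v $$ (i,j)", OF _ assms(2)])
    show "(\<lambda>x. F (vec k x) $$ (i, j)) \<in> poly_funs k"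
      using assms(1) that unfolding poly_mat_fun_def by blast
  qed
qed

lemma mult_mat_vec_adj_inverse:
  assumes A: "(A :: 'k::field mat) \<in> carrier_mat n n" and "det A \<noteq> 0" and v: "v \<in> carrier_vec n"
  shows "A *\<^sub>v ((1 / det A) \<cdot>\<^sub>v (adj_mat A *\<^sub>v v)) = v"
proof -
  have "A *\<^sub>v ((1 / det A) \<cdot>\<^sub>v (adj_mat A *\<^sub>v v)) = (1 / det A) \<cdot>\<^sub>v ((A * adj_mat A) *\<^sub>v v)"
    using A v adj_mat(1)[OF A] by (simp add: mult_mat_vec assoc_mult_mat_vec)
  also have "(A * adj_mat A) *\<^sub>v v = det A \<cdot>\<^sub>v v" using adj_mat(2)[OF A] v by auto
  finally show ?thesis using assms by (simp add: smult_smult_assoc)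
qed

lemma adj_inverse_mult_mat_vec:
  assumes A: "(A :: 'k::field mat) \<in> carrier_mat n n" and "det A \<noteq> 0" and v: "v \<in> carrier_vec n"
  shows "(1 / det A) \<cdot>\<^sub>v (adj_mat A *\<^sub>v (A *\<^sub>v v)) = v"
proof -
  have "adj_mat A *\<^sub>v (A *\<^sub>v v) = (adj_mat A * A) *\<^sub>v v"
    using A v adj_mat(1)[OF A] by (simp add: assoc_mult_mat_vec)
  also have "\<dots> = det A \<cdot>\<^sub>v v" using adj_mat(3)[OF A] v by auto
  finally show ?thesis using assms by (simp add: smult_smult_assoc)
qed

lemma invertible_mat_inverse_carrier:
  assumes "invertible_mat (A :: 'a::comm_ring_1 mat)" "A \<in> carrier_mat n n"
  shows "\<exists>B\<in>carrier_mat n n. A * B = 1\<^sub>m n \<and> B * A = 1\<^sub>m n"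
proof -
  obtain B where B: "A * B = 1\<^sub>m (dim_row A)" "B * A = 1\<^sub>m (dim_row B)"
    using assms unfolding invertible_mat_def inverts_mat_def by blast
  have "dim_col B = n" using B(1) assms(2) by (metis carrier_matD(1) index_mult_mat(3) index_one_mat(3))
  moreover have "dim_row B = n" using B(2) assms(2)
    by (metis carrier_matD(2) index_mult_mat(2) index_mult_mat(3) index_one_mat(2) index_one_mat(3))
  ultimately show ?thesis using B assms(2) by auto
qed

lemma invertible_mat_det_nonzero:
  assumes "invertible_mat (A :: 'a::field mat)" "A \<in> carrier_mat n n"
  shows "det A \<noteq> 0"
proof -
  obtain B where B: "B \<in> carrier_mat n n" "A * B = 1\<^sub>m n"
    using invertible_mat_inverse_carrier[OF assms] by blast
  have "det A * det B = 1" using det_mult[OF assms(2) B(1)] B(2) by simp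
  then show ?thesis by auto
qed

locale GL_rep =
  fixes G :: "('g, 'b) monoid_scheme" (structure) and n :: nat and \<beta> :: "'g \<Rightarrow> 'k::field mat"
  assumes group: "group G" and hom: "\<beta> \<in> hom G (GL n)"
begin

lemma rep_carrier: "g \<in> carrier G \<Longrightarrow> \<beta> g \<in> carrier_mat n n"
  using hom unfolding hom_def GL_def by auto

lemma rep_invertible: "g \<in> carrier G \<Longrightarrow> invertible_mat (\<beta> g)"
  using hom unfolding hom_def GL_def by auto

lemma rep_mult: "g \<in> carrier G \<Longrightarrow> h \<in> carrier G \<Longrightarrow> \<beta> (g \<otimes> h) = \<beta> g * \<beta> h"
  using hom unfolding hom_def GL_def by auto

lemma rep_det_nonzero: "g \<in> carrier G \<Longrightarrow> det (\<beta> g) \<noteq> 0"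
  using invertible_mat_det_nonzero[OF rep_invertible rep_carrier] .

lemma rep_one: "\<beta> \<one> = 1\<^sub>m n"
proof -
  interpret group G by (rule group)
  let ?I = "\<beta> \<one>"
  have I: "?I \<in> carrier_mat n n" and idem: "?I = ?I * ?I" using rep_carrier rep_mult[of \<one> \<one>] by auto
  obtain B where B: "B \<in> carrier_mat n n" "B * ?I = 1\<^sub>m n"
    using invertible_mat_inverse_carrier[OF rep_invertible I] by auto
  have "?I = (B * ?I) * ?I" using B I by simp
  also have "\<dots> = B * (?I * ?I)" using B I by (metis assoc_mult_mat)
  finally show ?thesis using idem B by simp
qed

end

lemma moment_curve_fixed_root:
  assumes A: "(A :: 'k::field mat) \<in> carrier_mat n n" and "A \<noteq> 1\<^sub>m n"
  shows "\<exists>q. q \<noteq> 0 \<and> (\<forall>t. A *\<^sub>v vec n (\<lambda>j. t ^ j) = vec n (\<lambda>j. t ^ j) \<longrightarrow> poly q t = 0)"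
proof -
  obtain r c where rc: "r < n" "c < n" "A $$ (r, c) \<noteq> 1\<^sub>m n $$ (r, c)"
    using assms by (metis carrier_matD eq_matI index_one_mat(2,3))
  define q where "q = (\<Sum>j<n. monom (A $$ (r, j) - 1\<^sub>m n $$ (r, j)) j)"
  have "coeff q c \<noteq> 0"
    unfolding q_def coeff_sum coeff_monom using rc by (simp add: sum.delta)
  then have "q \<noteq> 0" by auto
  moreover have "poly q t = 0" if fixed: "A *\<^sub>v vec n (\<lambda>j. t ^ j) = vec n (\<lambda>j. t ^ j)" for t
  proof -
    have "poly q t = (\<Sum>j<n. A $$ (r, j) * t ^ j) - (\<Sum>j<n. 1\<^sub>m n $$ (r, j) * t ^ j)"
      unfolding q_def poly_sum poly_monom by (simp add: algebra_simps sum_subtractf)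
    also have "(\<Sum>j<n. A $$ (r, j) * t ^ j) = t ^ r"
      using arg_cong[OF fixed, of "\<lambda>v. v $ r"] mult_mat_vec_vec_index[OF A rc(1)] rc(1) by simp
    also have "(\<Sum>j<n. 1\<^sub>m n $$ (r, j) * t ^ j) = t ^ r"
      using rc(1) by (simp add: if_distrib[of "\<lambda>x. x * _"] cong: if_cong)
    finally show ?thesis by simp
  qed
  ultimately show ?thesis by blast
qed

lemma exists_vec_moved_by_all:
  fixes S :: "'k::field mat set"
  assumes "infinite (UNIV :: 'k set)" "finite S" "\<And>A. A \<in> S \<Longrightarrow> A \<in> carrier_mat n n \<and> A \<noteq> 1\<^sub>m n"
  shows "\<exists>x0\<in>carrier_vec n. \<forall>A\<in>S. A *\<^sub>v x0 \<noteq> x0"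
proof -
  have "\<forall>A\<in>S. \<exists>q. q \<noteq> 0 \<and> (\<forall>t. A *\<^sub>v vec n (\<lambda>j. t ^ j) = vec n (\<lambda>j. t ^ j) \<longrightarrow> poly q t = 0)"
    using assms(3) by (intro ballI moment_curve_fixed_root) auto
  then obtain q where q: "\<forall>A\<in>S. q A \<noteq> 0 \<and>
      (\<forall>t. A *\<^sub>v vec n (\<lambda>j. t ^ j) = vec n (\<lambda>j. t ^ j) \<longrightarrow> poly (q A) t = 0)"
    by (rule bchoice[THEN exE])
  have "(\<Prod>A\<in>S. q A) \<noteq> 0" using q assms(2) by auto
  then have "finite {t. poly (\<Prod>A\<in>S. q A) t = 0}" by (rule poly_roots_finite)
  then obtain t where t: "poly (\<Prod>A\<in>S. q A) t \<noteq> 0"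
    using assms(1) by (metis (mono_tags, lifting) ex_new_if_finite mem_Collect_eq)
  have "A *\<^sub>v vec n (\<lambda>j. t ^ j) \<noteq> vec n (\<lambda>j. t ^ j)" if "A \<in> S" for A
    using q t assms(2) that by (auto simp: poly_prod)
  moreover have "vec n (\<lambda>j. t ^ j) \<in> carrier_vec n" by simp
  ultimately show ?thesis by blast
qed

lemma exists_poly_separating_point:
  fixes x0 :: "'k::field vec"
  assumes "finite P" "P \<subseteq> carrier_vec n" "x0 \<in> carrier_vec n" "x0 \<notin> P"
  shows "\<exists>u. (\<lambda>x. u (vec n x)) \<in> poly_funs n \<and> u x0 = 1 \<and> (\<forall>p\<in>P. u p = 0)"
proof -
  have "\<exists>r<n. p $ r \<noteq> x0 $ r" if "p \<in> P" for p
    using assms that by (metis carrier_vecD eq_vecI subsetD)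
  then obtain r where r: "\<And>p. p \<in> P \<Longrightarrow> r p < n \<and> p $ r p \<noteq> x0 $ r p" by metis
  define u where "u v = (\<Prod>p\<in>P. inverse (x0 $ r p - p $ r p) * (v $ r p - p $ r p))" for v
  have "(\<lambda>x. u (vec n x)) = (\<lambda>x. \<Prod>p\<in>P. inverse (x0 $ r p - p $ r p) * (x (r p) - p $ r p))"
    unfolding u_def using r by (auto intro!: prod.cong)
  also have "\<dots> \<in> poly_funs n"
    using r by (intro poly_funs_prod poly_funs_cmult poly_funs_diff pf_var pf_const assms(1)) auto
  finally have "(\<lambda>x. u (vec n x)) \<in> poly_funs n" .
  moreover have "u x0 = 1"
    unfolding u_def using r by (intro prod.neutral) (metis left_inverse right_minus_eq)
  moreover have "u p = 0" if "p \<in> P" for p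
    unfolding u_def using assms(1) that by (intro prod_zero) auto
  ultimately show ?thesis by blast
qed

definition poly_equivariant_frame ::
    "('g, 'b) monoid_scheme \<Rightarrow> nat \<Rightarrow> ('g \<Rightarrow> 'k::field mat) \<Rightarrow> ('g \<Rightarrow> 'k mat) \<Rightarrow> ('k vec \<Rightarrow> 'k mat) \<Rightarrow> 'k vec \<Rightarrow> bool"
  where "poly_equivariant_frame G n \<beta> \<gamma> F x0 \<longleftrightarrow>
    (\<forall>v. F v \<in> carrier_mat n n) \<and> poly_mat_fun n n (\<lambda>x. F (vec n x)) \<and>
    (\<forall>g\<in>carrier G. \<forall>v\<in>carrier_vec n. F (\<gamma> g *\<^sub>v v) = \<beta> g * F v) \<and>
    x0 \<in> carrier_vec n \<and> F x0 = 1\<^sub>m n"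

locale GL_rep_pair = b: GL_rep G n \<beta> + c: GL_rep G n \<gamma>
  for G :: "('g, 'b) monoid_scheme" (structure) and n and \<beta> \<gamma> :: "'g \<Rightarrow> 'k::field mat"
begin

definition average :: "('k vec \<Rightarrow> 'k) \<Rightarrow> 'k vec \<Rightarrow> 'k mat" where
  "average u v = mat n n (\<lambda>(i, j). \<Sum>h\<in>carrier G. u (\<gamma> (inv h) *\<^sub>v v) * \<beta> h $$ (i, j))"

lemma average_carrier: "average u v \<in> carrier_mat n n"
  unfolding average_def by simp

lemma poly_mat_fun_average:
  assumes "finite (carrier G)" "(\<lambda>x. u (vec n x)) \<in> poly_funs n"
  shows "poly_mat_fun n n (\<lambda>x. average u (vec n x))"
  unfolding poly_mat_fun_def
proof (intro conjI allI impI)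
  interpret group G by (rule b.group)
  show "average u (vec n x) \<in> carrier_mat n n" for x by (rule average_carrier)
  fix i j assume ij: "i < n" "j < n"
  have "(\<lambda>x. u (\<gamma> (inv h) *\<^sub>v vec n x)) \<in> poly_funs n" if "h \<in> carrier G" for h
    using that by (intro poly_funs_comp_vec[OF assms(2)] poly_vec_fun_mult_mat_vec
        poly_mat_fun_const c.rep_carrier poly_vec_fun_vec) auto
  then have "(\<lambda>x. \<Sum>h\<in>carrier G. u (\<gamma> (inv h) *\<^sub>v vec n x) * \<beta> h $$ (i, j)) \<in> poly_funs n"
    by (intro poly_funs_sum[OF assms(1)] pf_mult pf_const)
  then show "(\<lambda>x. average u (vec n x) $$ (i, j)) \<in> poly_funs n"
    unfolding average_def using ij by simp
qed

lemma average_equivariant: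
  assumes g: "g \<in> carrier G" and v: "v \<in> carrier_vec n"
  shows "average u (\<gamma> g *\<^sub>v v) = \<beta> g * average u v"
proof (rule eq_matI)
  interpret group G by (rule b.group)
  fix i j assume "i < dim_row (\<beta> g * average u v)" "j < dim_col (\<beta> g * average u v)"
  then have ij: "i < n" "j < n" using b.rep_carrier[OF g] by (auto simp: average_def)
  define a where "a h = u (\<gamma> (inv h) *\<^sub>v v)" for h
  have "average u (\<gamma> g *\<^sub>v v) $$ (i, j) = (\<Sum>h\<in>carrier G. a (inv g \<otimes> h) * \<beta> h $$ (i, j))"
    unfolding average_def a_def using ij g v
    by (auto intro!: sum.cong simp: c.rep_mult assoc_mult_mat_vec[symmetric, OF c.rep_carrier c.rep_carrier v]
        inv_mult_group)
  also have "\<dots> = (\<Sum>h\<in>carrier G. a h * \<beta> (g \<otimes> h) $$ (i, j))"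
    using sum.reindex_bij_betw[OF bij_betw_imageI[OF inj_on_cmult[OF g] surj_const_mult[OF g]],
        of "\<lambda>h. a (inv g \<otimes> h) * \<beta> h $$ (i, j)"] g
    by (simp add: m_assoc[symmetric])
  also have "\<dots> = (\<Sum>h\<in>carrier G. \<Sum>l<n. \<beta> g $$ (i, l) * (a h * \<beta> h $$ (l, j)))"
  proof (rule sum.cong[OF refl])
    fix h assume h: "h \<in> carrier G"
    have "(\<beta> g * \<beta> h) $$ (i, j) = (\<Sum>l<n. \<beta> g $$ (i, l) * \<beta> h $$ (l, j))"
      using b.rep_carrier[OF g] b.rep_carrier[OF h] ij by (simp add: scalar_prod_def atLeast0LessThan)
    then show "a h * \<beta> (g \<otimes> h) $$ (i, j) = (\<Sum>l<n. \<beta> g $$ (i, l) * (a h * \<beta> h $$ (l, j)))"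
      using g h by (simp add: b.rep_mult sum_distrib_left algebra_simps)
  qed
  also have "\<dots> = (\<beta> g * average u v) $$ (i, j)"
    using b.rep_carrier[OF g] ij unfolding average_def a_def
    by (subst sum.swap) (simp add: scalar_prod_def atLeast0LessThan sum_distrib_left)
  finally show "average u (\<gamma> g *\<^sub>v v) $$ (i, j) = (\<beta> g * average u v) $$ (i, j)" .
qed (use b.rep_carrier[OF g] in \<open>auto simp: average_def\<close>)

lemma average_eq_one:
  assumes "finite (carrier G)"
    and "\<And>h. h \<in> carrier G \<Longrightarrow> u (\<gamma> (inv h) *\<^sub>v x0) = (if h = \<one> then 1 else 0)"
  shows "average u x0 = 1\<^sub>m n"
proof (rule eq_matI)
  interpret group G by (rule b.group)
  fix i j assume "i < dim_row (1\<^sub>m n :: 'k mat)" "j < dim_col (1\<^sub>m n :: 'k mat)"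
  then have "average u x0 $$ (i, j) = (\<Sum>h\<in>carrier G. if h = \<one> then \<beta> h $$ (i, j) else 0)"
    unfolding average_def using assms(2) by (auto intro!: sum.cong)
  also have "\<dots> = \<beta> \<one> $$ (i, j)" using assms(1) by (simp add: sum.delta')
  finally show "average u x0 $$ (i, j) = 1\<^sub>m n $$ (i, j)" using b.rep_one by simp
qed (auto simp: average_def)

lemma exists_poly_equivariant_frame:
  assumes "infinite (UNIV :: 'k set)" "finite (carrier G)" "inj_on \<gamma> (carrier G)"
  shows "\<exists>F x0. poly_equivariant_frame G n \<beta> \<gamma> F x0"
proof -
  interpret group G by (rule b.group)
  let ?N = "carrier G - {\<one>}"
  have "\<exists>x0\<in>carrier_vec n. \<forall>A\<in>\<gamma> ` ?N. A *\<^sub>v x0 \<noteq> x0"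
  proof (rule exists_vec_moved_by_all[OF assms(1)])
    show "finite (\<gamma> ` ?N)" using assms(2) by simp
    fix A assume "A \<in> \<gamma> ` ?N"
    then obtain g where g: "g \<in> carrier G" "g \<noteq> \<one>" "A = \<gamma> g" by auto
    have "\<gamma> g \<noteq> \<gamma> \<one>" using assms(3) g by (meson inj_on_def one_closed)
    then show "A \<in> carrier_mat n n \<and> A \<noteq> 1\<^sub>m n" using g c.rep_carrier c.rep_one by auto
  qed
  then obtain x0 where x0: "x0 \<in> carrier_vec n" and moved: "\<And>g. g \<in> ?N \<Longrightarrow> \<gamma> g *\<^sub>v x0 \<noteq> x0"
    by auto
  have "\<exists>u. (\<lambda>x. u (vec n x)) \<in> poly_funs n \<and> u x0 = 1 \<and> (\<forall>p\<in>(\<lambda>g. \<gamma> g *\<^sub>v x0) ` ?N. u p = 0)"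
  proof (rule exists_poly_separating_point[OF _ _ x0])
    show "finite ((\<lambda>g. \<gamma> g *\<^sub>v x0) ` ?N)" using assms(2) by simp
    show "(\<lambda>g. \<gamma> g *\<^sub>v x0) ` ?N \<subseteq> carrier_vec n"
      using c.rep_carrier x0 by (auto intro: mult_mat_vec_carrier)
    show "x0 \<notin> (\<lambda>g. \<gamma> g *\<^sub>v x0) ` ?N" using moved by force
  qed
  then obtain u where u: "(\<lambda>x. u (vec n x)) \<in> poly_funs n" "u x0 = 1"
    and vanish: "\<And>g. g \<in> ?N \<Longrightarrow> u (\<gamma> g *\<^sub>v x0) = 0"
    by auto
  have "u (\<gamma> (inv h) *\<^sub>v x0) = (if h = \<one> then 1 else 0)" if "h \<in> carrier G" for h
    using that u(2) vanish[of "inv h"] x0 c.rep_one by auto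
  then have "average u x0 = 1\<^sub>m n" by (rule average_eq_one[OF assms(2)])
  then show ?thesis unfolding poly_equivariant_frame_def
    using average_carrier poly_mat_fun_average[OF assms(2) u(1)] average_equivariant x0 by blast
qed

end

definition fst_coords :: "nat \<Rightarrow> (nat \<Rightarrow> 'k) \<Rightarrow> 'k vec" where
  "fst_coords n p = vec n p"

definition snd_coords :: "nat \<Rightarrow> (nat \<Rightarrow> 'k) \<Rightarrow> 'k vec" where
  "snd_coords n p = vec n (\<lambda>j. p (n + j))"

definition pair_point :: "nat \<Rightarrow> 'k vec \<Rightarrow> 'k vec \<Rightarrow> nat \<Rightarrow> 'k" where
  "pair_point n a b = (\<lambda>i. if i < n then a $ i else b $ (i - n))"

definition ratmap_of ::
    "nat \<Rightarrow> ((nat \<Rightarrow> 'k::field) \<Rightarrow> 'k vec) \<Rightarrow> ((nat \<Rightarrow> 'k) \<Rightarrow> 'k vec) \<Rightarrow> ((nat \<Rightarrow> 'k) \<Rightarrow> 'k) \<Rightarrow> 'k ratmap"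
  where "ratmap_of n a b d =
    ((\<lambda>i p. if i < n then a p $ i else if i < 2 * n then b p $ (i - n) else 0),
     (\<lambda>i p. if i < n then 1 else if i < 2 * n then d p else 1))"

lemma fst_coords_carrier [simp]: "fst_coords n p \<in> carrier_vec n"
  unfolding fst_coords_def by simp

lemma snd_coords_carrier [simp]: "snd_coords n p \<in> carrier_vec n"
  unfolding snd_coords_def by simp

lemma poly_vec_fun_fst_coords: "poly_vec_fun (2 * n) n (fst_coords n)"
  unfolding poly_vec_fun_def fst_coords_def by (auto intro: pf_var)

lemma poly_vec_fun_snd_coords: "poly_vec_fun (2 * n) n (snd_coords n)"
  unfolding poly_vec_fun_def snd_coords_def by (auto intro: pf_var)

lemma coords_pair_point:
  "a \<in> carrier_vec n \<Longrightarrow> fst_coords n (pair_point n a b) = a"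
  "b \<in> carrier_vec n \<Longrightarrow> snd_coords n (pair_point n a b) = b"
  unfolding fst_coords_def snd_coords_def pair_point_def by (auto intro: eq_vecI)

lemma coords_eq_imp_eq:
  assumes "fst_coords n q = fst_coords n r" "snd_coords n q = snd_coords n r"
  shows "\<forall>i < 2 * n. q i = r i"
proof (intro allI impI)
  fix i assume i: "i < 2 * n"
  show "q i = r i"
  proof (cases "i < n")
    case True
    then show ?thesis using arg_cong[OF assms(1), of "\<lambda>v. v $ i"] unfolding fst_coords_def by simp
  next
    case False
    then have "i - n < n" "n + (i - n) = i" using i by auto
    then show ?thesis using arg_cong[OF assms(2), of "\<lambda>v. v $ (i - n)"] unfolding snd_coords_def by simp
  qed
qed

lemma coords_lin_act2:
  assumes "A \<in> carrier_mat n n"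
  shows "fst_coords n (lin_act2 n A p) = A *\<^sub>v fst_coords n p"
    and "snd_coords n (lin_act2 n A p) = snd_coords n p"
  using assms mult_mat_vec_vec_index[OF assms, of _ p]
  unfolding fst_coords_def snd_coords_def lin_act2_def by (auto intro!: eq_vecI)

lemma is_ratmap_ratmap_of:
  assumes "poly_vec_fun (2 * n) n a" "poly_vec_fun (2 * n) n b" "d \<in> poly_funs (2 * n)" "d c \<noteq> 0"
  shows "is_ratmap (2 * n) (ratmap_of n a b d)"
  unfolding is_ratmap_def ratmap_of_def fst_conv snd_conv
proof (intro allI impI conjI)
  fix i assume i: "i < 2 * n"
  show "(\<lambda>p. if i < n then a p $ i else if i < 2 * n then b p $ (i - n) else 0) \<in> poly_funs (2 * n)"
    using assms i unfolding poly_vec_fun_def by (cases "i < n") auto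
  show "(\<lambda>p. if i < n then 1 else if i < 2 * n then d p else 1) \<in> poly_funs (2 * n)"
    using assms i by (cases "i < n") (auto intro: pf_const)
  show "\<exists>p. (if i < n then 1 else if i < 2 * n then d p else 1) \<noteq> 0"
    using assms i by auto
qed

lemma rm_defined_ratmap_of: "d p \<noteq> 0 \<Longrightarrow> rm_defined (2 * n) (ratmap_of n a b d) p"
  unfolding rm_defined_def ratmap_of_def by auto

lemma coords_rm_eval_ratmap_of:
  "a p \<in> carrier_vec n \<Longrightarrow> fst_coords n (rm_eval (ratmap_of n a b d) p) = a p"
  "b p \<in> carrier_vec n \<Longrightarrow> snd_coords n (rm_eval (ratmap_of n a b d) p) = (1 / d p) \<cdot>\<^sub>v b p"
  unfolding fst_coords_def snd_coords_def rm_eval_def ratmap_of_def by (auto intro!: eq_vecI)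

locale frame_pair = a1: GL_rep G n \<alpha>1 + a2: GL_rep G n \<alpha>2
  for G :: "('g, 'b) monoid_scheme" (structure) and n and \<alpha>1 \<alpha>2 :: "'g \<Rightarrow> 'k::field mat" +
  fixes F E :: "'k vec \<Rightarrow> 'k mat" and x0 y0 :: "'k vec"
  assumes F: "poly_equivariant_frame G n \<alpha>1 \<alpha>2 F x0"
    and E: "poly_equivariant_frame G n \<alpha>2 \<alpha>1 E y0"
begin

lemma F_carrier: "F v \<in> carrier_mat n n"
  and E_carrier: "E v \<in> carrier_mat n n"
  and F_equivariant: "g \<in> carrier G \<Longrightarrow> v \<in> carrier_vec n \<Longrightarrow> F (\<alpha>2 g *\<^sub>v v) = \<alpha>1 g * F v"
  and E_equivariant: "g \<in> carrier G \<Longrightarrow> v \<in> carrier_vec n \<Longrightarrow> E (\<alpha>1 g *\<^sub>v v) = \<alpha>2 g * E v"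
  and base_points: "x0 \<in> carrier_vec n" "y0 \<in> carrier_vec n" "F x0 = 1\<^sub>m n" "E y0 = 1\<^sub>m n"
  using F E unfolding poly_equivariant_frame_def by auto

lemma poly_mat_fun_F_comp: "poly_vec_fun (2 * n) n w \<Longrightarrow> poly_mat_fun (2 * n) n (\<lambda>p. F (w p))"
  and poly_mat_fun_E_comp: "poly_vec_fun (2 * n) n w \<Longrightarrow> poly_mat_fun (2 * n) n (\<lambda>p. E (w p))"
  using F E poly_mat_fun_comp_vec unfolding poly_equivariant_frame_def by blast+

definition fwd :: "(nat \<Rightarrow> 'k) \<Rightarrow> 'k vec" where
  "fwd p = F (fst_coords n p) *\<^sub>v snd_coords n p"

definition bwd :: "(nat \<Rightarrow> 'k) \<Rightarrow> 'k vec" where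
  "bwd p = E (fst_coords n p) *\<^sub>v snd_coords n p"

(* The inverse matrices of the header are written as adj/det, which makes \<phi> and \<psi> fractions of polynomials. *)
definition \<phi> :: "'k ratmap" where
  "\<phi> = ratmap_of n fwd (\<lambda>p. adj_mat (E (fwd p)) *\<^sub>v fst_coords n p) (\<lambda>p. det (E (fwd p)))"

definition \<psi> :: "'k ratmap" where
  "\<psi> = ratmap_of n bwd (\<lambda>p. adj_mat (F (bwd p)) *\<^sub>v fst_coords n p) (\<lambda>p. det (F (bwd p)))"

lemma fwd_carrier: "fwd p \<in> carrier_vec n" and bwd_carrier: "bwd p \<in> carrier_vec n"
  unfolding fwd_def bwd_def
  using mult_mat_vec_carrier[OF F_carrier snd_coords_carrier] mult_mat_vec_carrier[OF E_carrier snd_coords_carrier]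
  by auto

lemma poly_vec_fun_fwd: "poly_vec_fun (2 * n) n fwd"
  and poly_vec_fun_bwd: "poly_vec_fun (2 * n) n bwd"
  unfolding fwd_def bwd_def
  by (intro poly_vec_fun_mult_mat_vec poly_mat_fun_F_comp poly_mat_fun_E_comp
      poly_vec_fun_fst_coords poly_vec_fun_snd_coords)+

lemma coords_\<phi>:
  "fst_coords n (rm_eval \<phi> p) = fwd p"
  "snd_coords n (rm_eval \<phi> p) = (1 / det (E (fwd p))) \<cdot>\<^sub>v (adj_mat (E (fwd p)) *\<^sub>v fst_coords n p)"
  unfolding \<phi>_def using fwd_carrier adj_mat(1)[OF E_carrier]
  by (auto intro!: coords_rm_eval_ratmap_of mult_mat_vec_carrier)

lemma coords_\<psi>:
  "fst_coords n (rm_eval \<psi> p) = bwd p"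
  "snd_coords n (rm_eval \<psi> p) = (1 / det (F (bwd p))) \<cdot>\<^sub>v (adj_mat (F (bwd p)) *\<^sub>v fst_coords n p)"
  unfolding \<psi>_def using bwd_carrier adj_mat(1)[OF F_carrier]
  by (auto intro!: coords_rm_eval_ratmap_of mult_mat_vec_carrier)

lemma rm_defined_\<phi>: "det (E (fwd p)) \<noteq> 0 \<Longrightarrow> rm_defined (2 * n) \<phi> p"
  and rm_defined_\<psi>: "det (F (bwd p)) \<noteq> 0 \<Longrightarrow> rm_defined (2 * n) \<psi> p"
  unfolding \<phi>_def \<psi>_def by (simp_all add: rm_defined_ratmap_of)

lemma is_ratmap_\<phi>: "is_ratmap (2 * n) \<phi>"
proof -
  have "fwd (pair_point n x0 y0) = y0"
    unfolding fwd_def using base_points by (simp add: coords_pair_point)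
  then have "det (E (fwd (pair_point n x0 y0))) \<noteq> 0" using base_points by simp
  then show ?thesis unfolding \<phi>_def
    by (intro is_ratmap_ratmap_of[where c = "pair_point n x0 y0"] poly_vec_fun_fwd poly_vec_fun_mult_mat_vec
        poly_mat_fun_adj poly_mat_fun_E_comp poly_vec_fun_fst_coords
        poly_funs_det[OF poly_mat_fun_E_comp[OF poly_vec_fun_fwd]])
qed

lemma is_ratmap_\<psi>: "is_ratmap (2 * n) \<psi>"
proof -
  have "bwd (pair_point n y0 x0) = x0"
    unfolding bwd_def using base_points by (simp add: coords_pair_point)
  then have "det (F (bwd (pair_point n y0 x0))) \<noteq> 0" using base_points by simp
  then show ?thesis unfolding \<psi>_def
    by (intro is_ratmap_ratmap_of[where c = "pair_point n y0 x0"] poly_vec_fun_bwd poly_vec_fun_mult_mat_vec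
        poly_mat_fun_adj poly_mat_fun_F_comp poly_vec_fun_fst_coords
        poly_funs_det[OF poly_mat_fun_F_comp[OF poly_vec_fun_bwd]])
qed

lemma bwd_\<phi>: "det (E (fwd p)) \<noteq> 0 \<Longrightarrow> bwd (rm_eval \<phi> p) = fst_coords n p"
  unfolding bwd_def coords_\<phi> by (rule mult_mat_vec_adj_inverse[OF E_carrier _ fst_coords_carrier])

lemma fwd_\<psi>: "det (F (bwd p)) \<noteq> 0 \<Longrightarrow> fwd (rm_eval \<psi> p) = fst_coords n p"
  unfolding fwd_def coords_\<psi> by (rule mult_mat_vec_adj_inverse[OF F_carrier _ fst_coords_carrier])

lemma \<psi>_after_\<phi>:
  assumes F_det: "det (F (fst_coords n p)) \<noteq> 0" and E_det: "det (E (fwd p)) \<noteq> 0"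
  shows "rm_defined (2 * n) \<phi> p \<and> rm_defined (2 * n) \<psi> (rm_eval \<phi> p) \<and>
    (\<forall>i < 2 * n. rm_eval \<psi> (rm_eval \<phi> p) i = p i)"
proof -
  let ?q = "rm_eval \<phi> p"
  have "fst_coords n (rm_eval \<psi> ?q) = fst_coords n p" unfolding coords_\<psi> bwd_\<phi>[OF E_det] ..
  moreover have "snd_coords n (rm_eval \<psi> ?q) = snd_coords n p"
    unfolding coords_\<psi> bwd_\<phi>[OF E_det] unfolding coords_\<phi> fwd_def
    by (rule adj_inverse_mult_mat_vec[OF F_carrier F_det snd_coords_carrier])
  ultimately show ?thesis
    using rm_defined_\<phi>[OF E_det] rm_defined_\<psi>[of ?q] bwd_\<phi>[OF E_det] F_det coords_eq_imp_eq by auto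
qed

lemma \<phi>_after_\<psi>:
  assumes E_det: "det (E (fst_coords n p)) \<noteq> 0" and F_det: "det (F (bwd p)) \<noteq> 0"
  shows "rm_defined (2 * n) \<psi> p \<and> rm_defined (2 * n) \<phi> (rm_eval \<psi> p) \<and>
    (\<forall>i < 2 * n. rm_eval \<phi> (rm_eval \<psi> p) i = p i)"
proof -
  let ?q = "rm_eval \<psi> p"
  have "fst_coords n (rm_eval \<phi> ?q) = fst_coords n p" unfolding coords_\<phi> fwd_\<psi>[OF F_det] ..
  moreover have "snd_coords n (rm_eval \<phi> ?q) = snd_coords n p"
    unfolding coords_\<phi> fwd_\<psi>[OF F_det] unfolding coords_\<psi> bwd_def
    by (rule adj_inverse_mult_mat_vec[OF E_carrier E_det snd_coords_carrier])
  ultimately show ?thesis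
    using rm_defined_\<psi>[OF F_det] rm_defined_\<phi>[of ?q] fwd_\<psi>[OF F_det] E_det coords_eq_imp_eq by auto
qed

lemma \<phi>_conj_\<psi>:
  assumes g: "g \<in> carrier G"
    and E_det: "det (E (fst_coords n p)) \<noteq> 0" and F_det: "det (F (bwd p)) \<noteq> 0"
  shows "rm_defined (2 * n) \<psi> p \<and> rm_defined (2 * n) \<phi> (lin_act2 n (\<alpha>2 g) (rm_eval \<psi> p)) \<and>
    (\<forall>i < 2 * n. rm_eval \<phi> (lin_act2 n (\<alpha>2 g) (rm_eval \<psi> p)) i = lin_act2 n (\<alpha>1 g) p i)"
proof -
  let ?q = "rm_eval \<psi> p"
  let ?q' = "lin_act2 n (\<alpha>2 g) ?q"
  let ?M = "\<alpha>2 g * E (fst_coords n p)"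
  have M: "?M \<in> carrier_mat n n" using a2.rep_carrier[OF g] E_carrier by (rule mult_carrier_mat)
  have M_det: "det ?M \<noteq> 0" using det_mult[OF a2.rep_carrier[OF g] E_carrier] a2.rep_det_nonzero[OF g] E_det by simp
  have fst_q': "fst_coords n ?q' = ?M *\<^sub>v snd_coords n p"
    unfolding coords_lin_act2[OF a2.rep_carrier[OF g]] coords_\<psi> bwd_def
    using assoc_mult_mat_vec[OF a2.rep_carrier[OF g] E_carrier snd_coords_carrier] by simp
  have "fwd ?q' = \<alpha>1 g *\<^sub>v fwd ?q"
    unfolding fwd_def coords_lin_act2[OF a2.rep_carrier[OF g]] coords_\<psi>(1) F_equivariant[OF g bwd_carrier]
    using assoc_mult_mat_vec[OF a1.rep_carrier[OF g] F_carrier snd_coords_carrier] by simp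
  then have fwd_q': "fwd ?q' = \<alpha>1 g *\<^sub>v fst_coords n p" using fwd_\<psi>[OF F_det] by simp
  then have E_fwd_q': "E (fwd ?q') = ?M" using E_equivariant[OF g fst_coords_carrier] by simp
  have "fst_coords n (rm_eval \<phi> ?q') = fst_coords n (lin_act2 n (\<alpha>1 g) p)"
    unfolding coords_\<phi> fwd_q' coords_lin_act2[OF a1.rep_carrier[OF g]] ..
  moreover have "snd_coords n (rm_eval \<phi> ?q') = snd_coords n (lin_act2 n (\<alpha>1 g) p)"
    unfolding coords_\<phi> E_fwd_q' fst_q' coords_lin_act2[OF a1.rep_carrier[OF g]]
    by (rule adj_inverse_mult_mat_vec[OF M M_det snd_coords_carrier])
  ultimately show ?thesis
    using rm_defined_\<psi>[OF F_det] rm_defined_\<phi>[of ?q'] E_fwd_q' M_det coords_eq_imp_eq by auto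
qed

lemma \<phi>_conjugates:
  "birational_pair (2 * n) \<phi> \<psi> \<and>
     (\<forall>g \<in> carrier G.
        contains_nonempty_open (2 * n)
          {x. rm_defined (2 * n) \<psi> x \<and>
              rm_defined (2 * n) \<phi> (lin_act2 n (\<alpha>2 g) (rm_eval \<psi> x)) \<and>
              (\<forall>i < 2 * n. rm_eval \<phi> (lin_act2 n (\<alpha>2 g) (rm_eval \<psi> x)) i = lin_act2 n (\<alpha>1 g) x i)})"
proof -
  define h\<phi> where "h\<phi> p = det (F (fst_coords n p)) * det (E (fwd p))" for p
  define h\<psi> where "h\<psi> p = det (E (fst_coords n p)) * det (F (bwd p))" for p
  have "h\<phi> \<in> poly_funs (2 * n)" "h\<psi> \<in> poly_funs (2 * n)"
    unfolding h\<phi>_def h\<psi>_def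
    using poly_funs_det[OF poly_mat_fun_F_comp[OF poly_vec_fun_fst_coords]]
      poly_funs_det[OF poly_mat_fun_E_comp[OF poly_vec_fun_fst_coords]]
      poly_funs_det[OF poly_mat_fun_F_comp[OF poly_vec_fun_bwd]]
      poly_funs_det[OF poly_mat_fun_E_comp[OF poly_vec_fun_fwd]]
    by (auto intro: pf_mult)
  moreover have "h\<phi> (pair_point n x0 y0) \<noteq> 0" "h\<psi> (pair_point n y0 x0) \<noteq> 0"
    unfolding h\<phi>_def h\<psi>_def fwd_def bwd_def using base_points by (simp_all add: coords_pair_point)
  moreover have "{p. h\<phi> p \<noteq> 0} \<subseteq> {p. rm_defined (2 * n) \<phi> p \<and> rm_defined (2 * n) \<psi> (rm_eval \<phi> p) \<and>
      (\<forall>i < 2 * n. rm_eval \<psi> (rm_eval \<phi> p) i = p i)}"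
    unfolding h\<phi>_def using \<psi>_after_\<phi> by auto
  moreover have "{p. h\<psi> p \<noteq> 0} \<subseteq> {p. rm_defined (2 * n) \<psi> p \<and> rm_defined (2 * n) \<phi> (rm_eval \<psi> p) \<and>
      (\<forall>i < 2 * n. rm_eval \<phi> (rm_eval \<psi> p) i = p i)}"
    unfolding h\<psi>_def using \<phi>_after_\<psi> by auto
  moreover have "{p. h\<psi> p \<noteq> 0} \<subseteq> {p. rm_defined (2 * n) \<psi> p \<and>
      rm_defined (2 * n) \<phi> (lin_act2 n (\<alpha>2 g) (rm_eval \<psi> p)) \<and>
      (\<forall>i < 2 * n. rm_eval \<phi> (lin_act2 n (\<alpha>2 g) (rm_eval \<psi> p)) i = lin_act2 n (\<alpha>1 g) p i)}"
    if "g \<in> carrier G" for g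
    unfolding h\<psi>_def using \<phi>_conj_\<psi>[OF that] by auto
  ultimately show ?thesis
    unfolding birational_pair_def contains_nonempty_open_def using is_ratmap_\<phi> is_ratmap_\<psi> by blast
qed

end

theorem proposition3p2:
  fixes G :: "('g, 'b) monoid_scheme"
    and \<alpha>1 \<alpha>2 :: "'g \<Rightarrow> 'k::field_char_0 mat"
    and n :: nat
  assumes "alg_closed_field TYPE('k)"
    and "group G" and "finite (carrier G)"
    and "\<alpha>1 \<in> hom G (GL n)" and "inj_on \<alpha>1 (carrier G)"
    and "\<alpha>2 \<in> hom G (GL n)" and "inj_on \<alpha>2 (carrier G)"
  shows "\<exists>\<phi> \<psi>. birational_pair (2 * n) \<phi> \<psi> \<and>
           (\<forall>g \<in> carrier G.
              contains_nonempty_open (2 * n)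
                {x. rm_defined (2 * n) \<psi> x \<and>
                    rm_defined (2 * n) \<phi> (lin_act2 n (\<alpha>2 g) (rm_eval \<psi> x)) \<and>
                    (\<forall>i < 2 * n. rm_eval \<phi> (lin_act2 n (\<alpha>2 g) (rm_eval \<psi> x)) i
                                 = lin_act2 n (\<alpha>1 g) x i)})"
proof -
  interpret r12: GL_rep_pair G n \<alpha>1 \<alpha>2 using assms(2,4,6) by (simp add: GL_rep_pair_def GL_rep_def)
  interpret r21: GL_rep_pair G n \<alpha>2 \<alpha>1 using assms(2,4,6) by (simp add: GL_rep_pair_def GL_rep_def)
  obtain F x0 where "poly_equivariant_frame G n \<alpha>1 \<alpha>2 F x0"
    using r12.exists_poly_equivariant_frame[OF infinite_UNIV_char_0 assms(3,7)] by blast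
  moreover obtain E y0 where "poly_equivariant_frame G n \<alpha>2 \<alpha>1 E y0"
    using r21.exists_poly_equivariant_frame[OF infinite_UNIV_char_0 assms(3,5)] by blast
  ultimately interpret frame_pair G n \<alpha>1 \<alpha>2 F E x0 y0
    using assms(2,4,6) by (simp add: frame_pair_def frame_pair_axioms_def GL_rep_def)
  show ?thesis using \<phi>_conjugates by blast
qed

end
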